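(* Let $X$ be a Hausdorff space with $X=Y\cup T$, where $Y$ and $T$ are totally disconnected subspaces and $T$ is compact. Then $\mathcal{K}(X)$ is hereditarily disconnected if and only if the quotient space $X/T$ (obtained by collapsing $T$ to a point) is hereditarily disconnected.
   Context: $\mathcal{K}(X)$ is the set of nonempty compact subsets of $X$ with the Vietoris topology (generated by $U^+=\{A: A\subset U\}$ and $U^-=\{A: A\cap U\neq\emptyset\}$ for $U$ open in $X$). A space is hereditarily disconnected if every nonempty connected subset is a singleton; it is totally disconnected if any two distinct points can be separated by a clopen set. *)

theory Defs
  imports "HOL-Analysis.Analysis"
begin

definition hereditarily_disconnected :: "'a topology \<Rightarrow> bool" where
  "hereditarily_disconnected X \<longleftrightarrow>
     (\<forall>S. connectedin X S \<and> S \<noteq> {} \<longrightarrow> (\<exists>a. S = {a}))"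

definition totally_disconnected_space :: "'a topology \<Rightarrow> bool" where
  "totally_disconnected_space X \<longleftrightarrow>
     (\<forall>x\<in>topspace X. \<forall>y\<in>topspace X. x \<noteq> y \<longrightarrow>
        (\<exists>C. openin X C \<and> closedin X C \<and> x \<in> C \<and> y \<notin> C))"

definition compact_sets :: "'a topology \<Rightarrow> 'a set set" where
  "compact_sets X = {A. A \<noteq> {} \<and> compactin X A}"

definition vietoris :: "'a topology \<Rightarrow> 'a set topology" where
  "vietoris X = topology_generated_by
     ({{A \<in> compact_sets X. A \<subseteq> U} | U. openin X U} \<union>
      {{A \<in> compact_sets X. A \<inter> U \<noteq> {}} | U. openin X U})"

lemma topspace_vietoris: "topspace (vietoris X) = compact_sets X"
  unfolding vietoris_def topology_generated_by_topspace compact_sets_def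
  by (auto dest: compactin_subset_topspace)

text \<open>The quotient space X/T obtained by collapsing T to a point: its points are
  the classes T and {x} for x in topspace X - T; a set of classes is open iff
  its union is open in X.\<close>
definition collapse_classes :: "'a topology \<Rightarrow> 'a set \<Rightarrow> 'a set set" where
  "collapse_classes X T = (\<lambda>x. if x \<in> T then T else {x}) ` topspace X"

definition collapse_topology :: "'a topology \<Rightarrow> 'a set \<Rightarrow> 'a set topology" where
  "collapse_topology X T =
     topology (\<lambda>U. U \<subseteq> collapse_classes X T \<and> openin X (\<Union>U))"

lemma istopology_collapse:
  "istopology (\<lambda>U. U \<subseteq> collapse_classes X T \<and> openin X (\<Union>U))"
proof -
  have disj: "\<Union>(U \<inter> V) = \<Union>U \<inter> \<Union>V"
    if "U \<subseteq> collapse_classes X T" "V \<subseteq> collapse_classes X T" for U V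
  proof
    show "\<Union>U \<inter> \<Union>V \<subseteq> \<Union>(U \<inter> V)"
    proof
      fix z assume "z \<in> \<Union>U \<inter> \<Union>V"
      then obtain a b where ab: "a \<in> U" "b \<in> V" "z \<in> a" "z \<in> b" by blast
      then have "a = b" using that unfolding collapse_classes_def
        by (auto split: if_splits)
      then show "z \<in> \<Union>(U \<inter> V)" using ab by blast
    qed
  qed blast
  have un: "openin X (\<Union>(\<Union>K))" if "\<forall>U\<in>K. openin X (\<Union>U)" for K
  proof -
    have "\<Union>(\<Union>K) = \<Union>(Union ` K)" by blast
    then show ?thesis using that by (metis (no_types, lifting) imageE openin_Union)
  qed
  show ?thesis unfolding istopology_def
    using disj un by (auto simp: openin_Int)
qed

lemma openin_collapse_topology:
  "openin (collapse_topology X T) U \<longleftrightarrow>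
     U \<subseteq> collapse_classes X T \<and> openin X (\<Union>U)"
  unfolding collapse_topology_def using topology_inverse'[OF istopology_collapse[of X T]] by simp

end

theory Submission
  imports Defs
begin

(*
  The map c |-> T Un c embeds X/T continuously and injectively into K(X), so hereditary
  disconnectedness passes from K(X) to X/T.

  Conversely, let C be a connected family in K(X) and K, L members of C. If open sets G1, G2
  split the union of C and L misses G1, then the Vietoris sets {A. A meets G1} and
  {A. A <= G2} separate C unless the union of C misses G1 altogether.
  A point of K - T outside L is ruled out as follows: since X/T is hereditarily disconnected,
  the point T can be split off from the points of Union C - L - T by open sets O1 >= T and O2
  of X; a clopen subset V of X - T containing the compact set L - O1 but not some point
  s of O2 in the union then gives G1 = O2 - T - V - L and G2 = O1 Un V.
  Once Union C - T <= L is known, a point x of K Int T outside L is ruled out similarly with a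
  clopen subset V of T containing L Int T but not x: Hausdorff separation of the compact sets
  T - V and V by open G and G' gives G1 = G - L and G2 = X - (T - V).
  Hence K <= L for all K, L in C, so C is a singleton.
*)

lemma openin_vietoris_upper:
  "openin X U \<Longrightarrow> openin (vietoris X) {A \<in> compact_sets X. A \<subseteq> U}"
  unfolding vietoris_def by (rule topology_generated_by_Basis) blast

lemma openin_vietoris_lower:
  "openin X U \<Longrightarrow> openin (vietoris X) {A \<in> compact_sets X. A \<inter> U \<noteq> {}}"
  unfolding vietoris_def by (rule topology_generated_by_Basis) blast

lemma continuous_map_insert_vietoris:
  assumes "compactin X T"
  shows "continuous_map X (vietoris X) (\<lambda>x. insert x T)"
proof -
  have compact: "insert x T \<in> compact_sets X" if "x \<in> topspace X" for x
    using assms that compactin_Un[of X "{x}" T] by (simp add: compact_sets_def)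
  show ?thesis
    unfolding vietoris_def
  proof (rule continuous_on_generated_topo)
    fix \<U> assume "\<U> \<in> {{A \<in> compact_sets X. A \<subseteq> W} |W. openin X W} \<union>
                       {{A \<in> compact_sets X. A \<inter> W \<noteq> {}} |W. openin X W}"
    then consider W where "openin X W" "\<U> = {A \<in> compact_sets X. A \<subseteq> W}"
      | W where "openin X W" "\<U> = {A \<in> compact_sets X. A \<inter> W \<noteq> {}}"
      by blast
    then show "openin X ((\<lambda>x. insert x T) -` \<U> \<inter> topspace X)"
    proof cases
      case (1 W)
      then have "(\<lambda>x. insert x T) -` \<U> \<inter> topspace X = (if T \<subseteq> W then W else {})"
        using compact openin_subset[OF 1(1)] by auto
      then show ?thesis using 1 by simp
    next
      case (2 W)
      then have "(\<lambda>x. insert x T) -` \<U> \<inter> topspace X = (if T \<inter> W \<noteq> {} then topspace X else W)"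
        using compact openin_subset[OF 2(1)] by auto
      then show ?thesis using 2 by simp
    qed
  next
    show "(\<lambda>x. insert x T) ` topspace X \<subseteq> \<Union>({{A \<in> compact_sets X. A \<subseteq> W} |W. openin X W} \<union>
            {{A \<in> compact_sets X. A \<inter> W \<noteq> {}} |W. openin X W})"
    proof (intro image_subsetI UnionI UnI1)
      show "{A \<in> compact_sets X. A \<subseteq> topspace X} \<in> {{A \<in> compact_sets X. A \<subseteq> W} |W. openin X W}"
        by blast
      show "insert x T \<in> {A \<in> compact_sets X. A \<subseteq> topspace X}" if "x \<in> topspace X" for x
        using compact[OF that] compactin_subset_topspace by (auto simp: compact_sets_def)
    qed
  qed
qed

definition collapse_map :: "'a set \<Rightarrow> 'a \<Rightarrow> 'a set" where
  "collapse_map T x = (if x \<in> T then T else {x})"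

lemma collapse_classes_eq_image: "collapse_classes X T = collapse_map T ` topspace X"
  unfolding collapse_classes_def collapse_map_def ..

lemma topspace_collapse_topology:
  assumes "T \<subseteq> topspace X"
  shows "topspace (collapse_topology X T) = collapse_classes X T"
proof -
  have "\<Union>(collapse_classes X T) = topspace X"
    using assms unfolding collapse_classes_def by auto
  then have "openin (collapse_topology X T) (collapse_classes X T)"
    by (simp add: openin_collapse_topology)
  then show ?thesis
    by (metis openin_collapse_topology openin_subset openin_topspace subset_antisym)
qed

lemma quotient_map_collapse:
  assumes "T \<subseteq> topspace X"
  shows "quotient_map X (collapse_topology X T) (collapse_map T)"
  unfolding quotient_map_def
proof (intro conjI allI impI)
  show "collapse_map T ` topspace X = topspace (collapse_topology X T)"
    by (simp add: topspace_collapse_topology[OF assms] collapse_classes_eq_image)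
  fix \<U> assume "\<U> \<subseteq> topspace (collapse_topology X T)"
  then have "\<U> \<subseteq> collapse_classes X T"
    by (simp add: topspace_collapse_topology[OF assms])
  then have "{x \<in> topspace X. collapse_map T x \<in> \<U>} = \<Union>\<U>"
    using assms by (auto simp: collapse_classes_def collapse_map_def split: if_splits)
  then show "openin X {x \<in> topspace X. collapse_map T x \<in> \<U>} \<longleftrightarrow> openin (collapse_topology X T) \<U>"
    using \<open>\<U> \<subseteq> collapse_classes X T\<close> by (simp add: openin_collapse_topology)
qed

lemma hereditarily_disconnected_inj_continuous_map:
  assumes f: "continuous_map X Y f" "inj_on f (topspace X)"
    and "hereditarily_disconnected Y"
  shows "hereditarily_disconnected X"
  unfolding hereditarily_disconnected_def
proof (intro allI impI)
  fix S assume S: "connectedin X S \<and> S \<noteq> {}"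
  then obtain a where a: "f ` S = {a}"
    using assms connectedin_continuous_map_image[OF f(1)]
    unfolding hereditarily_disconnected_def by blast
  obtain s where s: "s \<in> S" using S by blast
  have "S \<subseteq> topspace X" using S connectedin_subset_topspace by blast
  then have "S \<subseteq> {s}"
    using a s f(2) by (metis image_eqI inj_on_contraD singletonD subset_iff insertI1)
  then show "\<exists>a. S = {a}" using s by blast
qed

lemma hereditarily_disconnected_collapse_if_vietoris:
  assumes "compactin X T" "hereditarily_disconnected (vietoris X)"
  shows "hereditarily_disconnected (collapse_topology X T)"
proof (rule hereditarily_disconnected_inj_continuous_map)
  have "T \<subseteq> topspace X" using assms(1) compactin_subset_topspace by blast
  have "(\<union>) T \<circ> collapse_map T = (\<lambda>x. insert x T)"
    by (auto simp: collapse_map_def fun_eq_iff)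
  then have "continuous_map X (vietoris X) ((\<union>) T \<circ> collapse_map T)"
    using continuous_map_insert_vietoris[OF assms(1)] by simp
  then show "continuous_map (collapse_topology X T) (vietoris X) ((\<union>) T)"
    by (rule continuous_compose_quotient_map[OF quotient_map_collapse[OF \<open>T \<subseteq> topspace X\<close>]])
  show "inj_on ((\<union>) T) (topspace (collapse_topology X T))"
    unfolding topspace_collapse_topology[OF \<open>T \<subseteq> topspace X\<close>] collapse_classes_def
    by (rule inj_onI) (auto split: if_splits)
qed (rule assms(2))

lemma totally_disconnected_space_subtopology:
  assumes "totally_disconnected_space X"
  shows "totally_disconnected_space (subtopology X S)"
  unfolding totally_disconnected_space_def
proof (intro ballI impI)
  fix x y assume xy: "x \<in> topspace (subtopology X S)" "y \<in> topspace (subtopology X S)" "x \<noteq> y"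
  then obtain C where "openin X C" "closedin X C" "x \<in> C" "y \<notin> C"
    using assms unfolding totally_disconnected_space_def by auto
  then show "\<exists>C. openin (subtopology X S) C \<and> closedin (subtopology X S) C \<and> x \<in> C \<and> y \<notin> C"
    using xy by (intro exI[of _ "C \<inter> S"]) (auto simp: openin_subtopology_Int closedin_subtopology)
qed

lemma totally_disconnected_space_clopen_separation:
  assumes td: "totally_disconnected_space X" and K: "compactin X K"
    and s: "s \<in> topspace X" "s \<notin> K"
  obtains V where "openin X V" "closedin X V" "K \<subseteq> V" "s \<notin> V"
proof -
  have "\<exists>C. openin X C \<and> closedin X C \<and> k \<in> C \<and> s \<notin> C" if "k \<in> K" for k
  proof -
    have "k \<in> topspace X" "k \<noteq> s" using that s compactin_subset_topspace[OF K] by auto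
    then show ?thesis using td s unfolding totally_disconnected_space_def by blast
  qed
  then obtain C where C: "\<And>k. k \<in> K \<Longrightarrow> openin X (C k) \<and> closedin X (C k) \<and> k \<in> C k \<and> s \<notin> C k"
    by metis
  then have "(\<forall>U\<in>C ` K. openin X U) \<and> K \<subseteq> \<Union>(C ` K)" by blast
  then obtain \<F> where \<F>: "finite \<F>" "\<F> \<subseteq> C ` K" "K \<subseteq> \<Union>\<F>"
    using K unfolding compactin_def by meson
  show thesis
  proof (rule that)
    show "openin X (\<Union>\<F>)" using \<F> C by (intro openin_Union) blast
    show "closedin X (\<Union>\<F>)" using \<F> C by (intro closedin_Union) blast+
    show "K \<subseteq> \<Union>\<F>" by (fact \<F>(3))
    show "s \<notin> \<Union>\<F>" using \<F>(2) C by blast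
  qed
qed

lemma connectedin_vietoris_imp_compactin:
  "connectedin (vietoris X) \<C> \<Longrightarrow> K \<in> \<C> \<Longrightarrow> compactin X K"
  using connectedin_subset_topspace by (fastforce simp: topspace_vietoris compact_sets_def)

lemma openin_clopen_in_open_subtopology:
  assumes "openin X W" "openin (subtopology X W) V" "closedin (subtopology X W) V"
  shows "openin X V" "openin X (W - V)"
proof -
  have "openin (subtopology X W) (W - V)"
    using openin_diff[OF openin_topspace assms(3)] openin_subset[OF assms(1)]
    by (simp add: Int_absorb1)
  then show "openin X V" "openin X (W - V)"
    using assms(1,2) openin_trans_full by blast+
qed

lemma vietoris_connectedin_Union_avoids:
  assumes conn: "connectedin (vietoris X) \<C>" and "B \<in> \<C>"
    and G: "openin X G1" "openin X G2" "\<Union>\<C> \<subseteq> G1 \<union> G2" "G1 \<inter> G2 \<inter> \<Union>\<C> = {}"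
    and "B \<inter> G1 = {}"
  shows "\<Union>\<C> \<inter> G1 = {}"
proof (rule ccontr)
  assume meets: "\<Union>\<C> \<inter> G1 \<noteq> {}"
  define E1 where "E1 = {A \<in> compact_sets X. A \<inter> G1 \<noteq> {}}"
  define E2 where "E2 = {A \<in> compact_sets X. A \<subseteq> G2}"
  have "\<C> \<subseteq> compact_sets X"
    using connectedin_subset_topspace[OF conn] by (simp add: topspace_vietoris)
  then have "\<C> \<subseteq> E1 \<union> E2" "E1 \<inter> E2 \<inter> \<C> = {}" "E1 \<inter> \<C> \<noteq> {}" "E2 \<inter> \<C> \<noteq> {}"
    using G meets assms(2,7) unfolding E1_def E2_def by blast+
  moreover have "openin (vietoris X) E1" "openin (vietoris X) E2"
    unfolding E1_def E2_def using G by (simp_all add: openin_vietoris_lower openin_vietoris_upper)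
  ultimately show False using conn unfolding connectedin by blast
qed

lemma hereditarily_disconnected_not_connectedin:
  assumes "hereditarily_disconnected X" "a \<in> S" "b \<in> S" "a \<noteq> b"
  shows "\<not> connectedin X S"
  using assms unfolding hereditarily_disconnected_def by blast

lemma collapse_topology_separation:
  assumes "T \<subseteq> topspace X" "hereditarily_disconnected (collapse_topology X T)"
    and "S \<subseteq> topspace X - T" "S \<noteq> {}"
  obtains O1 O2 where "openin X O1" "openin X O2" "S \<subseteq> O1 \<union> O2" "O1 \<inter> O2 \<inter> S = {}"
    "T \<subseteq> O1" "O2 \<inter> S \<noteq> {}"
proof (cases "T = {}")
  case True
  then show thesis using that[of "{}" "topspace X"] assms(3,4) by auto
next
  case False
  note result = that
  define q where "q = collapse_map T"
  have q: "continuous_map X (collapse_topology X T) q"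
    unfolding q_def by (rule quotient_imp_continuous_map[OF quotient_map_collapse[OF assms(1)]])
  have qT: "q t = T" if "t \<in> T" for t using that by (simp add: q_def collapse_map_def)
  have qS: "q s = {s}" if "s \<in> S" for s using that assms(3) by (auto simp: q_def collapse_map_def)
  obtain s where "s \<in> S" using assms(4) by blast
  have T_class: "T \<in> q ` (T \<union> S)" using qT \<open>T \<noteq> {}\<close> by blast
  have "\<not> connectedin (collapse_topology X T) (q ` (T \<union> S))"
  proof (rule hereditarily_disconnected_not_connectedin[OF assms(2) T_class])
    show "{s} \<in> q ` (T \<union> S)" using qS \<open>s \<in> S\<close> by blast
    show "T \<noteq> {s}" using \<open>s \<in> S\<close> assms(3) by blast
  qed
  moreover have "q ` (T \<union> S) \<subseteq> topspace (collapse_topology X T)"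
  proof -
    have "T \<union> S \<subseteq> topspace X" using assms(1,3) by blast
    then show ?thesis
      by (rule order_trans[OF image_mono continuous_map_image_subset_topspace[OF q]])
  qed
  ultimately obtain E1 E2 where E: "openin (collapse_topology X T) E1" "openin (collapse_topology X T) E2"
    "q ` (T \<union> S) \<subseteq> E1 \<union> E2" "E1 \<inter> E2 \<inter> q ` (T \<union> S) = {}"
    "E1 \<inter> q ` (T \<union> S) \<noteq> {}" "E2 \<inter> q ` (T \<union> S) \<noteq> {}"
    unfolding connectedin by blast
  have separation: thesis
    if "openin (collapse_topology X T) F1" "openin (collapse_topology X T) F2"
      "q ` (T \<union> S) \<subseteq> F1 \<union> F2" "F1 \<inter> F2 \<inter> q ` (T \<union> S) = {}"
      "F2 \<inter> q ` (T \<union> S) \<noteq> {}" "T \<in> F1"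
    for F1 F2
  proof (rule result)
    show "openin X {x \<in> topspace X. q x \<in> F1}" "openin X {x \<in> topspace X. q x \<in> F2}"
      using q that(1,2) by (simp_all add: openin_continuous_map_preimage)
    show "S \<subseteq> {x \<in> topspace X. q x \<in> F1} \<union> {x \<in> topspace X. q x \<in> F2}"
      using that(3) assms(3) by blast
    show "{x \<in> topspace X. q x \<in> F1} \<inter> {x \<in> topspace X. q x \<in> F2} \<inter> S = {}"
      using that(4) by blast
    show "T \<subseteq> {x \<in> topspace X. q x \<in> F1}"
      using that(6) qT assms(1) by blast
    show "{x \<in> topspace X. q x \<in> F2} \<inter> S \<noteq> {}"
      using that(4-6) qT assms(3) by blast
  qed
  consider "T \<in> E1" | "T \<in> E2" using T_class E(3) by blast
  then show thesis
  proof cases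
    case 1
    then show thesis using separation[of E1 E2] E by blast
  next
    case 2
    then show thesis using separation[of E2 E1] E by blast
  qed
qed

lemma vietoris_connectedin_diff_subset:
  assumes "Hausdorff_space X" "compactin X T"
    and td: "totally_disconnected_space (subtopology X (topspace X - T))"
    and hd: "hereditarily_disconnected (collapse_topology X T)"
    and conn: "connectedin (vietoris X) \<C>" and "K \<in> \<C>" "L \<in> \<C>"
  shows "K - T \<subseteq> L"
proof
  fix x assume "x \<in> K - T"
  show "x \<in> L"
  proof (rule ccontr)
    assume "x \<notin> L"
    have "T \<subseteq> topspace X" using assms(2) compactin_subset_topspace by blast
    have L: "compactin X L" using connectedin_vietoris_imp_compactin[OF conn \<open>L \<in> \<C>\<close>] .
    have "\<Union>\<C> \<subseteq> topspace X"
      using connectedin_vietoris_imp_compactin[OF conn] compactin_subset_topspace by blast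
    define S where "S = \<Union>\<C> - L - T"
    have "x \<in> S" using \<open>x \<in> K - T\<close> \<open>x \<notin> L\<close> \<open>K \<in> \<C>\<close> unfolding S_def by blast
    moreover have "S \<subseteq> topspace X - T" using \<open>\<Union>\<C> \<subseteq> topspace X\<close> unfolding S_def by blast
    ultimately obtain O1 O2 where O: "openin X O1" "openin X O2" "S \<subseteq> O1 \<union> O2"
      "O1 \<inter> O2 \<inter> S = {}" "T \<subseteq> O1" "O2 \<inter> S \<noteq> {}"
      using collapse_topology_separation[OF \<open>T \<subseteq> topspace X\<close> hd] by blast
    then obtain s where "s \<in> S" "s \<in> O2" by blast
    define J where "J = L - O1"
    have "compactin X ((topspace X - O1) \<inter> L)"
      using O(1) L by (intro closed_Int_compactin) auto
    moreover have "(topspace X - O1) \<inter> L = J" "J \<subseteq> topspace X - T"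
      using L compactin_subset_topspace O(5) unfolding J_def by blast+
    ultimately have "compactin (subtopology X (topspace X - T)) J"
      by (simp add: compactin_subtopology)
    moreover have "s \<in> topspace (subtopology X (topspace X - T))" "s \<notin> J"
      using \<open>s \<in> S\<close> \<open>S \<subseteq> topspace X - T\<close> unfolding S_def J_def by auto
    ultimately obtain V where V: "openin (subtopology X (topspace X - T)) V"
      "closedin (subtopology X (topspace X - T)) V" "J \<subseteq> V" "s \<notin> V"
      using totally_disconnected_space_clopen_separation[OF td] by metis
    have "openin X (topspace X - T)"
      using compactin_imp_closedin[OF assms(1,2)] by blast
    note V_open = openin_clopen_in_open_subtopology[OF this V(1,2)]
    define G1 where "G1 = O2 \<inter> (topspace X - T - V) - L"
    define G2 where "G2 = O1 \<union> V"
    have "\<Union>\<C> \<inter> G1 = {}"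
    proof (rule vietoris_connectedin_Union_avoids[OF conn \<open>L \<in> \<C>\<close>])
      show "openin X G1"
        unfolding G1_def using O(2) V_open(2) compactin_imp_closedin[OF assms(1) L] by blast
      show "openin X G2" unfolding G2_def using O(1) V_open(1) by blast
      show "\<Union>\<C> \<subseteq> G1 \<union> G2"
        using O(3,5) V(3) \<open>\<Union>\<C> \<subseteq> topspace X\<close> unfolding G1_def G2_def S_def J_def by blast
      show "G1 \<inter> G2 \<inter> \<Union>\<C> = {}"
        using O(4) unfolding G1_def G2_def S_def by blast
      show "L \<inter> G1 = {}" unfolding G1_def by blast
    qed
    moreover have "s \<in> \<Union>\<C> \<inter> G1"
      using \<open>s \<in> S\<close> \<open>s \<in> O2\<close> \<open>s \<notin> V\<close> \<open>S \<subseteq> topspace X - T\<close> unfolding S_def G1_def by blast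
    ultimately show False by blast
  qed
qed

lemma vietoris_connectedin_Int_subset:
  assumes H: "Hausdorff_space X" and "compactin X T"
    and td: "totally_disconnected_space (subtopology X T)"
    and conn: "connectedin (vietoris X) \<C>" and "K \<in> \<C>" "L \<in> \<C>"
    and outside_T: "\<Union>\<C> - T \<subseteq> L"
  shows "K \<inter> T \<subseteq> L"
proof
  fix x assume "x \<in> K \<inter> T"
  show "x \<in> L"
  proof (rule ccontr)
    assume "x \<notin> L"
    have "T \<subseteq> topspace X" using assms(2) compactin_subset_topspace by blast
    have clT: "closedin X T" using compactin_imp_closedin[OF H assms(2)] .
    have clL: "closedin X L"
      using compactin_imp_closedin[OF H connectedin_vietoris_imp_compactin[OF conn \<open>L \<in> \<C>\<close>]] .
    have "\<Union>\<C> \<subseteq> topspace X"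
      using connectedin_vietoris_imp_compactin[OF conn] compactin_subset_topspace by blast
    have "compactin (subtopology X T) (L \<inter> T)"
      using closed_Int_compactin[OF clL assms(2)] by (simp add: compactin_subtopology)
    moreover have "x \<in> topspace (subtopology X T)" "x \<notin> L \<inter> T"
      using \<open>x \<in> K \<inter> T\<close> \<open>x \<notin> L\<close> \<open>T \<subseteq> topspace X\<close> by auto
    ultimately obtain V where V: "openin (subtopology X T) V" "closedin (subtopology X T) V"
      "L \<inter> T \<subseteq> V" "x \<notin> V"
      using totally_disconnected_space_clopen_separation[OF td] by metis
    define D where "D = T - V"
    have "closedin (subtopology X T) D"
      using closedin_diff[OF closedin_topspace V(1)] \<open>T \<subseteq> topspace X\<close>
      unfolding D_def by (simp add: Int_absorb1)
    then have cD: "compactin X D"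
      using closed_compactin[OF assms(2) _ closedin_trans_full[OF _ clT]] unfolding D_def by blast
    have cV: "compactin X V"
      using closedin_subset[OF V(2)]
      by (intro closed_compactin[OF assms(2) _ closedin_trans_full[OF V(2) clT]]) auto
    have "disjnt D V" unfolding D_def disjnt_def by blast
    then obtain G G' where G: "openin X G" "openin X G'" "D \<subseteq> G" "V \<subseteq> G'" "disjnt G G'"
      by (rule Hausdorff_space_compact_separation[OF H cD cV])
    define G1 where "G1 = G - L"
    define G2 where "G2 = topspace X - D"
    have "\<Union>\<C> \<inter> G1 = {}"
    proof (rule vietoris_connectedin_Union_avoids[OF conn \<open>L \<in> \<C>\<close>])
      show "openin X G1" unfolding G1_def using G(1) clL by blast
      show "openin X G2" unfolding G2_def using compactin_imp_closedin[OF H cD] by blast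
      show "\<Union>\<C> \<subseteq> G1 \<union> G2"
        using G(3) V(3) \<open>\<Union>\<C> \<subseteq> topspace X\<close> unfolding G1_def G2_def D_def by blast
      show "G1 \<inter> G2 \<inter> \<Union>\<C> = {}"
        using outside_T G(4,5) unfolding G1_def G2_def D_def disjnt_def by blast
      show "L \<inter> G1 = {}" unfolding G1_def by blast
    qed
    moreover have "x \<in> \<Union>\<C> \<inter> G1"
      using \<open>x \<in> K \<inter> T\<close> \<open>x \<notin> L\<close> \<open>x \<notin> V\<close> \<open>K \<in> \<C>\<close> G(3) unfolding G1_def D_def by blast
    ultimately show False by blast
  qed
qed

lemma hereditarily_disconnected_vietoris_if_collapse:
  assumes "Hausdorff_space X" "compactin X T"
    and "totally_disconnected_space (subtopology X (topspace X - T))"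
    and "totally_disconnected_space (subtopology X T)"
    and "hereditarily_disconnected (collapse_topology X T)"
  shows "hereditarily_disconnected (vietoris X)"
  unfolding hereditarily_disconnected_def
proof (intro allI impI)
  fix \<C> assume "connectedin (vietoris X) \<C> \<and> \<C> \<noteq> {}"
  then have conn: "connectedin (vietoris X) \<C>" and "\<C> \<noteq> {}" by blast+
  have "K - T \<subseteq> L" if "K \<in> \<C>" "L \<in> \<C>" for K L
    using vietoris_connectedin_diff_subset[OF assms(1-3,5) conn that] .
  then have "K \<subseteq> L" if "K \<in> \<C>" "L \<in> \<C>" for K L
    using vietoris_connectedin_Int_subset[OF assms(1,2,4) conn that] that by blast
  then show "\<exists>K. \<C> = {K}"
    using \<open>\<C> \<noteq> {}\<close> by blast
qed

theorem corollary5p6: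
  fixes X :: "'a topology" and Y T :: "'a set"
  assumes "Hausdorff_space X"
    and "topspace X = Y \<union> T"
    and "totally_disconnected_space (subtopology X Y)"
    and "totally_disconnected_space (subtopology X T)"
    and "compactin X T"
  shows "hereditarily_disconnected (vietoris X) \<longleftrightarrow>
         hereditarily_disconnected (collapse_topology X T)"
proof
  assume "hereditarily_disconnected (vietoris X)"
  then show "hereditarily_disconnected (collapse_topology X T)"
    by (rule hereditarily_disconnected_collapse_if_vietoris[OF assms(5)])
next
  assume "hereditarily_disconnected (collapse_topology X T)"
  moreover have "subtopology X (topspace X - T) = subtopology (subtopology X Y) (topspace X - T)"
    using assms(2) by (simp add: subtopology_subtopology Int_absorb1 Diff_subset_conv)
  then have "totally_disconnected_space (subtopology X (topspace X - T))"
    using totally_disconnected_space_subtopology[OF assms(3)] by simp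
  ultimately show "hereditarily_disconnected (vietoris X)"
    using hereditarily_disconnected_vietoris_if_collapse assms(1,4,5) by blast
qed

end
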